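(* Run the mechanism BFM-VM described in the context with arbitrary $B>0$, $\alpha>1$, $\ell\in\{1,2\}$, with all sellers behaving truthfully. Then $$\sum_{i=1}^{\ell}\sum_{t=1}^{M}v(S_{i,t})\ \le\ \frac{4\alpha-2}{\alpha-1}\,v(S^* ).$$
   Context: Setting. $\mathcal{N}$ is a finite set of $n$ sellers. The valuation $v:2^{\mathcal{N}}\to\mathbb{R}_{\ge 0}$ satisfies $v(\emptyset)=0$ and is submodular (for $X\subseteq Y\subseteq\mathcal{N}$ and $u\notin Y$, $v(u\mid Y)\le v(u\mid X)$), not necessarily monotone, where $v(S\mid T)=v(S\cup T)-v(T)$, $v(u\mid T)=v(\{u\}\mid T)$, $v(u)=v(\{u\})$. Each seller $u$ has a private cost $c(u)\ge 0$. $B>0$ is the budget, $[\ell]=\{1,\dots,\ell\}$. Sellers behave truthfully: a seller $u$ offered price $q$ accepts iff $c(u)\le q$. Mechanism BFM-VM (inputs $B$, $\alpha>1$, $\ell\in\{1,2\}$): 1. Offer every seller the price $B$; let $R$ be the set of sellers who accept, and set $p(u)=B$ for $u\in R$. 2. Set $t=1$, $\rho_1=\max_{u\in R}v(u)$, $S_{1,1}=\{u_0\}$ for some $u_0\in\arg\max_{u\in R}v(u)$, and (if $\ell=2$) $S_{2,1}=\emptyset$. 3. Repeat rounds: set $t\leftarrow t+1$, $\rho_t=\alpha\rho_{t-1}$, $S_{i,t}=\emptyset$ for $i\in[\ell]$. Process the sellers $u\in R\setminus\bigcup_{i=1}^{\ell}S_{i,t-1}$ one at a time in a fixed order. For each such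 $u$: pick $j\in\arg\max_{i\in[\ell]}v(u\mid S_{i,t})$ (current contents); update $p(u)\leftarrow\min\{p(u),\ v(u\mid S_{j,t})/(\rho_t/B)\}$ and offer $p(u)$ to $u$. If $u$ accepts: if $v(S_{j,t}\cup\{u\})>\rho_t$, end the round immediately; otherwise add $u$ to $S_{j,t}$. If $u$ rejects, remove $u$ from $R$. After the round, stop if $R\setminus\bigcup_{i=1}^{\ell}(S_{i,t-1}\cup S_{i,t})=\emptyset$; otherwise start another round. 4. Let $M$ be the final value of $t$. Output $S^*\in\arg\max_{A\in\{S_{i,t}: i\in[\ell],\ t\in\{M-1,M\}\}}v(A)$, paying each $u\in S^*$ its current price $p(u)$. Notation: $S_{i,t}$ denotes the contents of that candidate set at the end of round $t$. *)

theory Defs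
  imports Complex_Main
begin

definition marg :: "('a set \<Rightarrow> real) \<Rightarrow> 'a \<Rightarrow> 'a set \<Rightarrow> real" where
  "marg v u S = v (insert u S) - v S"

definition submodular_on :: "'a set \<Rightarrow> ('a set \<Rightarrow> real) \<Rightarrow> bool" where
  "submodular_on N v \<longleftrightarrow>
     (\<forall>X Y u. X \<subseteq> Y \<longrightarrow> Y \<subseteq> N \<longrightarrow> u \<in> N \<longrightarrow> u \<notin> Y \<longrightarrow> marg v u Y \<le> marg v u X)"

text \<open>The arguments are:
  the list of sellers still to be processed (in the fixed order), the current
  set R, the current prices p, the current contents T i of the candidate sets
  S_{i,t} (i \<in> {1..l}); and the corresponding values at the end of the round.
  The choice of j among the maximisers is arbitrary (nondeterministic).
  Sellers are truthful: u accepts price q iff c u \<le> q.\<close>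
inductive bfm_round ::
  "('a set \<Rightarrow> real) \<Rightarrow> ('a \<Rightarrow> real) \<Rightarrow> real \<Rightarrow> nat \<Rightarrow> real \<Rightarrow>
   'a list \<Rightarrow> 'a set \<Rightarrow> ('a \<Rightarrow> real) \<Rightarrow> (nat \<Rightarrow> 'a set) \<Rightarrow>
   'a set \<Rightarrow> ('a \<Rightarrow> real) \<Rightarrow> (nat \<Rightarrow> 'a set) \<Rightarrow> bool"
  for v c B l rho
where
  finish: "bfm_round v c B l rho [] R p T R p T"
| reject: "\<lbrakk> j \<in> {1..l}; \<forall>i\<in>{1..l}. marg v u (T i) \<le> marg v u (T j);
            q = min (p u) (marg v u (T j) / (rho / B));
            \<not> c u \<le> q;
            bfm_round v c B l rho us (R - {u}) (p(u := q)) T R' p' T' \<rbrakk>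
          \<Longrightarrow> bfm_round v c B l rho (u # us) R p T R' p' T'"
| stop: "\<lbrakk> j \<in> {1..l}; \<forall>i\<in>{1..l}. marg v u (T i) \<le> marg v u (T j);
            q = min (p u) (marg v u (T j) / (rho / B));
            c u \<le> q; v (insert u (T j)) > rho \<rbrakk>
          \<Longrightarrow> bfm_round v c B l rho (u # us) R p T R (p(u := q)) T"
| add: "\<lbrakk> j \<in> {1..l}; \<forall>i\<in>{1..l}. marg v u (T i) \<le> marg v u (T j);
            q = min (p u) (marg v u (T j) / (rho / B));
            c u \<le> q; \<not> v (insert u (T j)) > rho;
            bfm_round v c B l rho us R (p(u := q)) (T(j := insert u (T j))) R' p' T' \<rbrakk>
          \<Longrightarrow> bfm_round v c B l rho (u # us) R p T R' p' T'"

text \<open>A complete (terminating) truthful execution of BFM-VM with inputs B, alpha, l,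
  fixed processing order ord (a list enumerating N), final round index M,
  candidate sets S i t (contents at the end of round t), output Sstar and final
  prices pfin.  R t and p t are the set R and the prices at the end of round t.\<close>
definition bfm_run ::
  "'a set \<Rightarrow> ('a set \<Rightarrow> real) \<Rightarrow> ('a \<Rightarrow> real) \<Rightarrow> real \<Rightarrow> real \<Rightarrow> nat \<Rightarrow> 'a list \<Rightarrow>
   nat \<Rightarrow> (nat \<Rightarrow> nat \<Rightarrow> 'a set) \<Rightarrow> 'a set \<Rightarrow> ('a \<Rightarrow> real) \<Rightarrow> bool" where
  "bfm_run N v c B alpha l ord M S Sstar pfin \<longleftrightarrow>
    (\<exists>(R :: nat \<Rightarrow> 'a set) (p :: nat \<Rightarrow> 'a \<Rightarrow> real) u0.
       \<comment> \<open>step 1\<close>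
       R 1 = {u \<in> N. c u \<le> B} \<and> p 1 = (\<lambda>_. B) \<and>
       \<comment> \<open>step 2\<close>
       u0 \<in> R 1 \<and> (\<forall>u\<in>R 1. v {u} \<le> v {u0}) \<and>
       (\<forall>i. S i 1 = (if i = 1 then {u0} else {})) \<and>
       \<comment> \<open>step 3: rounds t = 2..M, with rho_t = alpha^(t-1) * rho_1\<close>
       2 \<le> M \<and>
       (\<forall>t\<in>{2..M}.
          bfm_round v c B l (alpha ^ (t - 1) * v {u0})
            (filter (\<lambda>u. u \<in> R (t - 1) \<and> u \<notin> (\<Union>i\<in>{1..l}. S i (t - 1))) ord)
            (R (t - 1)) (p (t - 1)) (\<lambda>_. {})
            (R t) (p t) (\<lambda>i. S i t)) \<and>
       (\<forall>t\<in>{2..<M}. R t - (\<Union>i\<in>{1..l}. S i (t - 1) \<union> S i t) \<noteq> {}) \<and>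
       R M - (\<Union>i\<in>{1..l}. S i (M - 1) \<union> S i M) = {} \<and>
       \<comment> \<open>step 4\<close>
       Sstar \<in> {S i t | i t. i \<in> {1..l} \<and> t \<in> {M - 1, M}} \<and>
       (\<forall>i\<in>{1..l}. \<forall>t\<in>{M - 1, M}. v (S i t) \<le> v Sstar) \<and>
       pfin = p M)"

end

theory Submission imports Defs begin

(* Within round t every candidate set stays below rho_t = alpha^(t-1) rho_1, so the
   values of the first M - 2 rounds form a geometric series bounded by
   rho_(M-1) / (alpha - 1).  Since the run did not stop after round M - 1, that round
   ended by an overflow: adding some seller u to a candidate set pushed its value above
   rho_(M-1), and by submodularity rho_(M-1) < v(Sstar) + v(u) <= v(Sstar) + rho_1.  The last
   two rounds contribute at most 2 v(Sstar) per candidate set, and there are at most two. *)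

lemma sum_le_geometric:
  fixes a :: "nat \<Rightarrow> real"
  assumes "1 < alpha"
    and "\<And>t. t \<in> {1..n} \<Longrightarrow> a t \<le> alpha ^ (t - 1) * r"
    and "alpha ^ n * r \<le> V + r"
  shows "(\<Sum>t\<in>{1..n}. a t) \<le> V / (alpha - 1)"
proof -
  have "(\<Sum>t\<in>{1..n}. a t) \<le> (\<Sum>t\<in>{1..n}. alpha ^ (t - 1) * r)"
    by (rule sum_mono) (use assms(2) in auto)
  also have "\<dots> = (\<Sum>k<n. alpha ^ k) * r"
    by (simp add: sum.atLeast1_atMost_eq sum_distrib_right)
  also have "\<dots> = (alpha ^ n - 1) * r / (alpha - 1)"
    using assms(1) by (simp add: power_diff_1_eq)
  also have "\<dots> \<le> V / (alpha - 1)"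
    using assms(1,3) by (intro divide_right_mono) (auto simp: algebra_simps)
  finally show ?thesis .
qed

lemma sum_le_geometric_last_two:
  fixes a :: "nat \<Rightarrow> real"
  assumes "1 < alpha" and "2 \<le> M"
    and "\<And>t. t \<in> {1..M - 2} \<Longrightarrow> a t \<le> alpha ^ (t - 1) * r"
    and "alpha ^ (M - 2) * r \<le> V + r"
    and "a (M - 1) \<le> V" and "a M \<le> V"
  shows "(\<Sum>t\<in>{1..M}. a t) \<le> (2 * alpha - 1) / (alpha - 1) * V"
proof -
  obtain m where M: "M = Suc (Suc m)"
    using assms(2) by (metis add_2_eq_Suc le_Suc_ex)
  have "(\<Sum>t\<in>{1..M}. a t) = (\<Sum>t\<in>{1..M - 2}. a t) + a (M - 1) + a M"
    by (simp add: M)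
  also have "\<dots> \<le> V / (alpha - 1) + 2 * V"
    using sum_le_geometric[of alpha "M - 2" a r V] assms by simp
  also have "\<dots> = (2 * alpha - 1) / (alpha - 1) * V"
    using assms(1) by (simp add: field_simps)
  finally show ?thesis .
qed

lemma submodular_on_insert_le:
  assumes "submodular_on N v" and "v {} = 0"
    and "X \<subseteq> N" and "u \<in> N" and "0 \<le> v {u}"
  shows "v (insert u X) \<le> v X + v {u}"
proof (cases "u \<in> X")
  case True
  then show ?thesis
    using assms(5) by (simp add: insert_absorb)
next
  case False
  then have "marg v u X \<le> marg v u {}"
    using assms(1,3,4) unfolding submodular_on_def by blast
  then show ?thesis
    using assms(2) unfolding marg_def by simp
qed

context
  fixes v :: "'a set \<Rightarrow> real" and c :: "'a \<Rightarrow> real" and B rho :: real and l :: nat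
begin

lemma bfm_round_R_subset:
  "bfm_round v c B l rho us R p T R' p' T' \<Longrightarrow> R' \<subseteq> R"
  by (induction rule: bfm_round.induct) auto

lemma bfm_round_T_mono:
  "bfm_round v c B l rho us R p T R' p' T' \<Longrightarrow> T i \<subseteq> T' i"
  by (induction rule: bfm_round.induct) (auto split: if_splits)

lemma bfm_round_T_subset:
  "bfm_round v c B l rho us R p T R' p' T' \<Longrightarrow> T' i \<subseteq> T i \<union> set us"
  by (induction rule: bfm_round.induct) (fastforce split: if_splits)+

lemma bfm_round_value_le:
  assumes "bfm_round v c B l rho us R p T R' p' T'"
    and "\<forall>i\<in>{1..l}. v (T i) \<le> rho"
  shows "\<forall>i\<in>{1..l}. v (T' i) \<le> rho"
  using assms by induction (auto simp: not_less)

lemma bfm_round_overflows_or_covers: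
  assumes "bfm_round v c B l rho us R p T R' p' T'"
  shows "(\<exists>u\<in>set us. \<exists>j\<in>{1..l}. rho < v (insert u (T' j)))
    \<or> R' \<subseteq> (R - set us) \<union> (\<Union>i\<in>{1..l}. T' i)"
  using assms
proof induction
  case (add j u T q p us R R' p' T')
  have "u \<in> T' j"
    using bfm_round_T_mono[OF add.hyps(6), of j] by simp
  with add.IH add.hyps(1) show ?case by auto
qed auto

end

(* The witnesses R, p, u0 of bfm_run_def, with just the properties the bound needs. *)
locale bfm_execution =
  fixes N :: "'a set" and v :: "'a set \<Rightarrow> real" and c :: "'a \<Rightarrow> real"
    and B alpha :: real and l M :: nat and ord :: "'a list"
    and S :: "nat \<Rightarrow> nat \<Rightarrow> 'a set" and Sstar :: "'a set"
    and R :: "nat \<Rightarrow> 'a set" and p :: "nat \<Rightarrow> 'a \<Rightarrow> real" and u0 :: 'a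
  assumes v_empty: "v {} = 0"
    and v_nonneg: "\<And>X. X \<subseteq> N \<Longrightarrow> 0 \<le> v X"
    and submodular: "submodular_on N v"
    and alpha_gt_1: "1 < alpha"
    and l_cases: "l \<in> {1, 2}"
    and set_ord: "set ord = N"
    and R_1_subset: "R 1 \<subseteq> N"
    and u0_mem: "u0 \<in> R 1"
    and u0_max: "\<And>u. u \<in> R 1 \<Longrightarrow> v {u} \<le> v {u0}"
    and S_1: "\<And>i. S i 1 = (if i = 1 then {u0} else {})"
    and M_ge_2: "2 \<le> M"
    and round: "\<And>t. t \<in> {2..M} \<Longrightarrow>
      bfm_round v c B l (alpha ^ (t - 1) * v {u0})
        (filter (\<lambda>u. u \<in> R (t - 1) \<and> u \<notin> (\<Union>i\<in>{1..l}. S i (t - 1))) ord)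
        (R (t - 1)) (p (t - 1)) (\<lambda>_. {}) (R t) (p t) (\<lambda>i. S i t)"
    and continues: "\<And>t. t \<in> {2..<M} \<Longrightarrow> R t - (\<Union>i\<in>{1..l}. S i (t - 1) \<union> S i t) \<noteq> {}"
    and Sstar_max: "\<And>i t. i \<in> {1..l} \<Longrightarrow> t \<in> {M - 1, M} \<Longrightarrow> v (S i t) \<le> v Sstar"
begin

abbreviation rho :: "nat \<Rightarrow> real" where
  "rho t \<equiv> alpha ^ (t - 1) * v {u0}"

lemma u0_in_N: "u0 \<in> N"
  using u0_mem R_1_subset by blast

lemma rho_nonneg: "0 \<le> rho t"
  using v_nonneg[of "{u0}"] u0_in_N alpha_gt_1 by simp

lemma R_subset_R_1:
  assumes "1 \<le> t" and "t \<le> M"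
  shows "R t \<subseteq> R 1"
  using assms
proof (induction t rule: dec_induct)
  case (step n)
  then have "R (Suc n) \<subseteq> R n"
    using bfm_round_R_subset[OF round[of "Suc n"]] by simp
  with step show ?case by simp
qed simp

lemma S_subset_N:
  assumes "t \<in> {1..M}"
  shows "S i t \<subseteq> N"
proof (cases "t = 1")
  case True
  then show ?thesis
    using S_1 u0_in_N by simp
next
  case False
  with assms have "t \<in> {2..M}" by simp
  from bfm_round_T_subset[OF round[OF this]] show ?thesis
    using set_ord by auto
qed

lemma S_value_le_rho:
  assumes "i \<in> {1..l}" and "t \<in> {1..M}"
  shows "v (S i t) \<le> rho t"
proof (cases "t = 1")
  case True
  then show ?thesis
    using S_1 v_empty rho_nonneg[of 1] by simp
next
  case False
  with assms(2) have "t \<in> {2..M}" by simp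
  from bfm_round_value_le[OF round[OF this]] show ?thesis
    using assms(1) v_empty rho_nonneg[of t] by simp
qed

lemma Sstar_nonneg: "0 \<le> v Sstar"
  using Sstar_max[of 1 M] v_nonneg[OF S_subset_N[of M 1]] l_cases M_ge_2 by auto

lemma last_but_one_round_overflows:
  assumes "3 \<le> M"
  shows "\<exists>u\<in>R (M - 2). \<exists>j\<in>{1..l}. rho (M - 1) < v (insert u (S j (M - 1)))"
proof -
  define t where "t = M - 1"
  have t: "t \<in> {2..<M}" "t - 1 = M - 2"
    using assms unfolding t_def by auto
  let ?us = "filter (\<lambda>u. u \<in> R (t - 1) \<and> u \<notin> (\<Union>i\<in>{1..l}. S i (t - 1))) ord"
  have "R (t - 1) \<subseteq> R 1"
    by (rule R_subset_R_1) (use t(1) in auto)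
  then have "R (t - 1) \<subseteq> N"
    using R_1_subset by blast
  then have "R (t - 1) - set ?us \<subseteq> (\<Union>i\<in>{1..l}. S i (t - 1))"
    using set_ord by auto
  then have "\<not> R t \<subseteq> (R (t - 1) - set ?us) \<union> (\<Union>i\<in>{1..l}. S i t)"
    using continues[OF t(1)] by blast
  then show ?thesis
    using bfm_round_overflows_or_covers[OF round[of t]] t unfolding t_def by auto
qed

lemma rho_last_but_one_le: "rho (M - 1) \<le> v Sstar + rho 1"
proof (cases "M = 2")
  case True
  then show ?thesis
    using Sstar_nonneg by simp
next
  case False
  with M_ge_2 have "3 \<le> M" by simp
  then obtain u j where u: "u \<in> R (M - 2)" and j: "j \<in> {1..l}"
    and overflow: "rho (M - 1) < v (insert u (S j (M - 1)))"
    using last_but_one_round_overflows by blast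
  have "R (M - 2) \<subseteq> R 1"
    using R_subset_R_1[of "M - 2"] False M_ge_2 by simp
  with u have "u \<in> R 1" by blast
  then have uN: "u \<in> N" and u_le: "v {u} \<le> rho 1"
    using R_1_subset u0_max by auto
  have "S j (M - 1) \<subseteq> N"
    using S_subset_N M_ge_2 by simp
  from submodular_on_insert_le[OF submodular v_empty this uN v_nonneg]
  have "v (insert u (S j (M - 1))) \<le> v (S j (M - 1)) + rho 1"
    using uN u_le by simp
  also have "\<dots> \<le> v Sstar + rho 1"
    using Sstar_max[OF j] by simp
  finally show ?thesis
    using overflow by simp
qed

lemma sum_candidate_set_le:
  assumes "i \<in> {1..l}"
  shows "(\<Sum>t\<in>{1..M}. v (S i t)) \<le> (2 * alpha - 1) / (alpha - 1) * v Sstar"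
proof (rule sum_le_geometric_last_two[OF alpha_gt_1 M_ge_2])
  show "v (S i t) \<le> alpha ^ (t - 1) * v {u0}" if "t \<in> {1..M - 2}" for t
    by (rule S_value_le_rho[OF assms]) (use that in auto)
  show "alpha ^ (M - 2) * v {u0} \<le> v Sstar + v {u0}"
    using rho_last_but_one_le by (simp add: diff_diff_add numeral_2_eq_2)
qed (use Sstar_max[OF assms] in auto)

lemma sum_all_candidate_sets_le:
  "(\<Sum>i\<in>{1..l}. \<Sum>t\<in>{1..M}. v (S i t)) \<le> (4 * alpha - 2) / (alpha - 1) * v Sstar"
proof -
  have "(\<Sum>i\<in>{1..l}. \<Sum>t\<in>{1..M}. v (S i t)) \<le> real l * ((2 * alpha - 1) / (alpha - 1) * v Sstar)"
    using sum_bounded_above[of "{1..l}", OF sum_candidate_set_le] by simp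
  also have "\<dots> \<le> 2 * ((2 * alpha - 1) / (alpha - 1) * v Sstar)"
    using l_cases alpha_gt_1 Sstar_nonneg by (intro mult_right_mono) auto
  also have "\<dots> = (4 * alpha - 2) / (alpha - 1) * v Sstar"
    by (simp add: field_simps)
  finally show ?thesis .
qed

end

theorem lemma5p3:
  fixes N :: "'a set" and v :: "'a set \<Rightarrow> real" and c :: "'a \<Rightarrow> real"
    and B alpha :: real and l M :: nat and ord :: "'a list"
    and S :: "nat \<Rightarrow> nat \<Rightarrow> 'a set" and Sstar :: "'a set" and pfin :: "'a \<Rightarrow> real"
  assumes "finite N"
    and "v {} = 0"
    and "\<forall>X\<subseteq>N. v X \<ge> 0"
    and "submodular_on N v"
    and "\<forall>u\<in>N. c u \<ge> 0"
    and "B > 0" and "alpha > 1" and "l \<in> {1, 2}"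
    and "distinct ord" and "set ord = N"
    and "bfm_run N v c B alpha l ord M S Sstar pfin"
  shows "(\<Sum>i\<in>{1..l}. \<Sum>t\<in>{1..M}. v (S i t)) \<le> (4 * alpha - 2) / (alpha - 1) * v Sstar"
proof -
  from assms(11) obtain R p u0 where "R 1 = {u \<in> N. c u \<le> B}" and "u0 \<in> R 1"
    and "\<forall>u\<in>R 1. v {u} \<le> v {u0}" and "\<forall>i. S i 1 = (if i = 1 then {u0} else {})"
    and "2 \<le> M"
    and "\<forall>t\<in>{2..M}.
          bfm_round v c B l (alpha ^ (t - 1) * v {u0})
            (filter (\<lambda>u. u \<in> R (t - 1) \<and> u \<notin> (\<Union>i\<in>{1..l}. S i (t - 1))) ord)
            (R (t - 1)) (p (t - 1)) (\<lambda>_. {}) (R t) (p t) (\<lambda>i. S i t)"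
    and "\<forall>t\<in>{2..<M}. R t - (\<Union>i\<in>{1..l}. S i (t - 1) \<union> S i t) \<noteq> {}"
    and "\<forall>i\<in>{1..l}. \<forall>t\<in>{M - 1, M}. v (S i t) \<le> v Sstar"
    unfolding bfm_run_def by blast
  then interpret bfm_execution N v c B alpha l M ord S Sstar R p u0
    using assms(2-4,7,8,10) by unfold_locales auto
  show ?thesis
    by (rule sum_all_candidate_sets_le)
qed

end
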